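(* Let $(a_{n,k})_{n,k\ge1}$ be complex numbers such that each power series $1+\sum_{k=1}^{\infty}a_{n,k}\lambda^k$ is analytic (near $\lambda=0$) and the partial products $\prod_{n=1}^{N}\big(1+\sum_{k=1}^{\infty}a_{n,k}\lambda^k\big)$ converge uniformly as $N\to\infty$ to $\prod_{n=1}^{\infty}\big(1+\sum_{k=1}^{\infty}a_{n,k}\lambda^k\big)=1+\sum_{k=1}^{\infty}X_k\lambda^k$ (no convergence is assumed for series of the form $\sum_n\prod_j a_{n,k_j}$). For $N\in\mathbb{N}$ let $\epsilon^{(N)}_{n,k}:=1$ if $n<N$ and $\epsilon^{(N)}_{n,k}:=0$ otherwise. Then for every $k\in\mathbb{N}$, $$X_k=\lim_{N\to\infty}\sum_{L\vdash k}\frac{1}{C_{stb}(L)}\sum_{\sigma\in S_{\ell(L)}}\operatorname{sign}(\sigma)\,\mathbb{A}_{\sigma,L}\big(\{a_{n,k}\epsilon^{(N)}_{n,k}\}_{n,k\ge1}\big).$$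
   Context: $L\vdash k$ means $L=[x_1,\dots,x_m]$ is a partition of $k$ (multiset of positive integers summing to $k$), $\ell(L)=m$, and $C_{stb}(L):=\prod_x(\#\{i:x_i=x\})!$ over distinct values $x$ in $L$. For a family $b=(b_{n,j})_{n,j\ge1}$ with only finitely many nonzero rows, writing $L=[k_1,\dots,k_m]$ with $k_1\le\cdots\le k_m$ and decomposing $\sigma\in S_m$ into disjoint cycles $C_1,\dots,C_r$ (fixed points kept as length-one cycles), $\mathbb{A}_{\sigma,L}(b):=\prod_{t=1}^{r}\big(\sum_{n=1}^{\infty}\prod_{i\in C_t}b_{n,k_i}\big)$; $\operatorname{sign}(\sigma)$ is the sign of $\sigma$. *)

theory Defs
  imports "HOL-Analysis.Analysis" "HOL-Library.Multiset" "HOL-Combinatorics.Orbits"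
          "HOL-Combinatorics.Permutations"
begin

definition partitions :: "nat \<Rightarrow> nat multiset set" where
  "partitions k = {L. (\<forall>x\<in>#L. 0 < x) \<and> sum_mset L = k}"

definition C_stb :: "nat multiset \<Rightarrow> nat" where
  "C_stb L = (\<Prod>x\<in>set_mset L. fact (count L x))"

definition perm_cycles :: "(nat \<Rightarrow> nat) \<Rightarrow> nat \<Rightarrow> nat set set" where
  "perm_cycles \<sigma> m = (\<lambda>i. orbit \<sigma> i) ` {0..<m}"

text \<open>A_{sigma,L}(b): L sorted increasingly as k_0 \<le> ... \<le> k_{m-1} (0-based indices),
  product over cycles C of sum over n \<ge> 1 of prod over i in C of b n k_i.\<close>
definition A_op :: "(nat \<Rightarrow> nat) \<Rightarrow> nat multiset \<Rightarrow> (nat \<Rightarrow> nat \<Rightarrow> complex) \<Rightarrow> complex" where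
  "A_op \<sigma> L b = (let ks = sorted_list_of_multiset L in
     \<Prod>C\<in>perm_cycles \<sigma> (size L). (\<Sum>n. \<Prod>i\<in>C. b (Suc n) (ks ! i)))"

end

(* Expanding the product over the cycles of sigma in A_{sigma,L}(b) turns
   sum_sigma sign(sigma) A_{sigma,L}(b) into a sum over all maps f from the m positions of L to the
   rows n, each weighted by the total sign of the permutations that fix f.  That weight is 1 if f
   is injective and 0 otherwise, since composing with a transposition of two positions having the
   same image is a sign-reversing involution.  For the family truncated at N the inner sum is
   therefore the sum over pairwise distinct rows n_1, ..., n_m < N of prod_i a_{n_i,k_i}.
   Weighting by 1/C_stb(L) and summing over the partitions L of k amounts to summing over all
   compositions (k_1, ..., k_m) of k with weight 1/m!, and this is exactly the k-th Taylor
   coefficient of the finite product prod_{n<N} (1 + sum_j a_{n,j} z^j).  These coefficients are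
   k-th derivatives at 0 divided by k!, so they converge to X_k by Weierstrass' theorem on
   uniform limits of holomorphic functions. *)

theory Submission
  imports Defs "HOL-Combinatorics.Multiset_Permutations" "HOL-Complex_Analysis.Cauchy_Integral_Formula"
begin

section \<open>Sign cancellation over the cycles of a permutation\<close>

lemma sum_sign_stabilizer:
  fixes f :: "'i \<Rightarrow> 'b"
  assumes A: "finite A"
  shows "(\<Sum>\<sigma>\<in>{p. p permutes A \<and> (\<forall>i\<in>A. f (p i) = f i)}. sign \<sigma>) = (if inj_on f A then 1 else 0)"
proof (cases "inj_on f A")
  case True
  have "{p. p permutes A \<and> (\<forall>i\<in>A. f (p i) = f i)} = {id}"
  proof (intro set_eqI iffI)
    fix p assume "p \<in> {p. p permutes A \<and> (\<forall>i\<in>A. f (p i) = f i)}"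
    hence p: "p permutes A" "\<forall>i\<in>A. f (p i) = f i" by auto
    have "p i = i" for i
      using p True permutes_in_image[OF p(1), of i] permutes_not_in[OF p(1), of i]
      by (cases "i \<in> A") (auto dest: inj_onD)
    thus "p \<in> {id}" by auto
  qed (auto simp: permutes_id)
  with True show ?thesis by simp
next
  case False
  then obtain i j where ij: "i \<in> A" "j \<in> A" "i \<noteq> j" "f i = f j"
    unfolding inj_on_def by auto
  define G where "G = {p. p permutes A \<and> (\<forall>i\<in>A. f (p i) = f i)}"
  define \<tau> where "\<tau> = Transposition.transpose i j"
  have \<tau>: "\<tau> permutes A" "f (\<tau> x) = f x" "\<tau> \<circ> \<tau> = id" "sign \<tau> = -1" for x
    using ij by (auto simp: \<tau>_def permutes_swap_id Transposition.transpose_def sign_swap_id)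
  have "(\<Sum>\<sigma>\<in>G. sign \<sigma>) = (\<Sum>\<sigma>\<in>G. sign (\<tau> \<circ> \<sigma>))"
    by (rule sum.reindex_bij_witness[of _ "\<lambda>\<sigma>. \<tau> \<circ> \<sigma>" "\<lambda>\<sigma>. \<tau> \<circ> \<sigma>"])
       (auto simp: G_def \<tau> comp_assoc[symmetric] intro: permutes_compose)
  also have "\<dots> = (\<Sum>\<sigma>\<in>G. - sign \<sigma>)"
  proof (intro sum.cong refl)
    fix \<sigma> assume "\<sigma> \<in> G"
    hence "permutation \<sigma>" "permutation \<tau>"
      using A \<tau>(1) by (auto simp: G_def permutation_permutes)
    thus "sign (\<tau> \<circ> \<sigma>) = - sign \<sigma>" by (simp add: sign_compose \<tau>(4))
  qed
  also have "\<dots> = - (\<Sum>\<sigma>\<in>G. sign \<sigma>)" by (rule sum_negf)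
  finally show ?thesis using False by (simp add: G_def)
qed

lemma permutes_invariant_const_on_orbit:
  assumes "\<sigma> permutes A" "\<forall>i\<in>A. f (\<sigma> i) = f i" "i \<in> A" "j \<in> orbit \<sigma> i"
  shows "f j = f i"
  using assms(4)
proof induction
  case base
  show ?case using assms(2,3) by blast
next
  case (step y)
  have "y \<in> A" using permutes_orbit_subset[OF assms(1,3)] step.hyps by blast
  with assms(2) step.IH show ?case by simp
qed

lemma prod_orbits_sum_eq_sum_invariant:
  fixes c :: "'b \<Rightarrow> 'i \<Rightarrow> 'a::comm_semiring_1"
  assumes \<sigma>: "\<sigma> permutes A" and A: "finite A" and S: "finite S"
  shows "(\<Prod>C\<in>orbit \<sigma> ` A. \<Sum>n\<in>S. \<Prod>i\<in>C. c n i)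
       = (\<Sum>f\<in>{f\<in>A \<rightarrow>\<^sub>E S. \<forall>i\<in>A. f (\<sigma> i) = f i}. \<Prod>i\<in>A. c (f i) i)"
proof -
  define P where "P = orbit \<sigma> ` A"
  have perm: "permutation \<sigma>" using \<sigma> A by (auto simp: permutation_permutes)
  have in_orbit: "i \<in> orbit \<sigma> j \<longleftrightarrow> i \<in> A \<and> orbit \<sigma> i = orbit \<sigma> j" if "j \<in> A" for i j
    using that permutes_orbit_subset[OF \<sigma> that] permutation_self_in_orbit[OF perm, of i]
      orbit_cyclic_eq3[OF cyclic_on_orbit'[OF perm], of i j] by auto
  have some_in_orbit: "(SOME i. i \<in> orbit \<sigma> j) \<in> orbit \<sigma> j" for j
    by (rule someI[of _ j]) (rule permutation_self_in_orbit[OF perm])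
  have rep: "(SOME i. i \<in> orbit \<sigma> j) \<in> A \<and> orbit \<sigma> (SOME i. i \<in> orbit \<sigma> j) = orbit \<sigma> j"
    if "j \<in> A" for j
    using some_in_orbit in_orbit[OF that] by blast
  have "(\<Prod>C\<in>P. \<Sum>n\<in>S. \<Prod>i\<in>C. c n i) = (\<Sum>g\<in>P \<rightarrow>\<^sub>E S. \<Prod>C\<in>P. \<Prod>i\<in>C. c (g C) i)"
    using A S by (intro prod_sum_PiE) (auto simp: P_def)
  also have "\<dots> = (\<Sum>g\<in>P \<rightarrow>\<^sub>E S. \<Prod>i\<in>A. c (g (orbit \<sigma> i)) i)"
  proof (rule sum.cong[OF refl])
    fix g
    have "(\<Prod>i\<in>A. c (g (orbit \<sigma> i)) i)
        = (\<Prod>C\<in>P. \<Prod>i\<in>{i\<in>A. orbit \<sigma> i = C}. c (g (orbit \<sigma> i)) i)"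
      unfolding P_def by (rule prod.image_gen[OF A])
    also have "\<dots> = (\<Prod>C\<in>P. \<Prod>i\<in>C. c (g C) i)"
    proof (rule prod.cong[OF refl])
      fix C assume "C \<in> P"
      then obtain j where j: "j \<in> A" and C: "C = orbit \<sigma> j" by (auto simp: P_def)
      have "{i\<in>A. orbit \<sigma> i = C} = C" and "\<And>i. i \<in> C \<Longrightarrow> orbit \<sigma> i = C"
        using in_orbit[OF j] C by auto
      thus "(\<Prod>i\<in>{i\<in>A. orbit \<sigma> i = C}. c (g (orbit \<sigma> i)) i) = (\<Prod>i\<in>C. c (g C) i)"
        by (intro prod.cong) auto
    qed
    finally show "(\<Prod>C\<in>P. \<Prod>i\<in>C. c (g C) i) = (\<Prod>i\<in>A. c (g (orbit \<sigma> i)) i)" ..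
  qed
  also have "\<dots> = (\<Sum>f\<in>{f\<in>A \<rightarrow>\<^sub>E S. \<forall>i\<in>A. f (\<sigma> i) = f i}. \<Prod>i\<in>A. c (f i) i)"
  proof (rule sum.reindex_bij_witness[of _ "\<lambda>f. \<lambda>C\<in>P. f (SOME i. i \<in> C)" "\<lambda>g. \<lambda>i\<in>A. g (orbit \<sigma> i)"])
    fix g assume g: "g \<in> P \<rightarrow>\<^sub>E S"
    show "(\<lambda>C\<in>P. (\<lambda>i\<in>A. g (orbit \<sigma> i)) (SOME i. i \<in> C)) = g"
      using g rep by (auto simp: fun_eq_iff PiE_def extensional_def P_def)
    show "(\<lambda>i\<in>A. g (orbit \<sigma> i)) \<in> {f\<in>A \<rightarrow>\<^sub>E S. \<forall>i\<in>A. f (\<sigma> i) = f i}"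
      using g permutes_in_image[OF \<sigma>] permutation_orbit_step[OF perm] by (auto simp: P_def)
    show "(\<Prod>i\<in>A. c ((\<lambda>i\<in>A. g (orbit \<sigma> i)) i) i) = (\<Prod>i\<in>A. c (g (orbit \<sigma> i)) i)"
      by (rule prod.cong) auto
  next
    fix f assume f: "f \<in> {f\<in>A \<rightarrow>\<^sub>E S. \<forall>i\<in>A. f (\<sigma> i) = f i}"
    have "f (SOME j. j \<in> orbit \<sigma> i) = f i" if "i \<in> A" for i
      using f that some_in_orbit by (intro permutes_invariant_const_on_orbit[OF \<sigma>]) auto
    thus "(\<lambda>i\<in>A. (\<lambda>C\<in>P. f (SOME i. i \<in> C)) (orbit \<sigma> i)) = f"
      using f by (auto simp: fun_eq_iff P_def PiE_def extensional_def)
    show "(\<lambda>C\<in>P. f (SOME i. i \<in> C)) \<in> P \<rightarrow>\<^sub>E S"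
      using f rep by (auto simp: P_def)
  qed
  finally show ?thesis by (simp add: P_def)
qed

lemma sum_sign_prod_orbits:
  fixes c :: "'b \<Rightarrow> 'i \<Rightarrow> 'a::comm_ring_1"
  assumes A: "finite A" and S: "finite S"
  shows "(\<Sum>\<sigma>\<in>{p. p permutes A}. of_int (sign \<sigma>) * (\<Prod>C\<in>orbit \<sigma> ` A. \<Sum>n\<in>S. \<Prod>i\<in>C. c n i))
       = (\<Sum>f\<in>{f\<in>A \<rightarrow>\<^sub>E S. inj_on f A}. \<Prod>i\<in>A. c (f i) i)"
proof -
  define W where "W f = (\<Prod>i\<in>A. c (f i) i)" for f
  have finE: "finite (A \<rightarrow>\<^sub>E S)" using A S by (rule finite_PiE)
  have finP: "finite {p. p permutes A}" using A by (rule finite_permutations)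
  have "(\<Sum>\<sigma>\<in>{p. p permutes A}. of_int (sign \<sigma>) * (\<Prod>C\<in>orbit \<sigma> ` A. \<Sum>n\<in>S. \<Prod>i\<in>C. c n i))
      = (\<Sum>\<sigma>\<in>{p. p permutes A}. \<Sum>f\<in>{f\<in>A \<rightarrow>\<^sub>E S. \<forall>i\<in>A. f (\<sigma> i) = f i}. of_int (sign \<sigma>) * W f)"
    by (intro sum.cong refl) (simp add: prod_orbits_sum_eq_sum_invariant A S sum_distrib_left W_def)
  also have "\<dots> = (\<Sum>f\<in>A \<rightarrow>\<^sub>E S. \<Sum>\<sigma>\<in>{\<sigma>\<in>{p. p permutes A}. \<forall>i\<in>A. f (\<sigma> i) = f i}. of_int (sign \<sigma>) * W f)"
    by (rule sum.swap_restrict[OF finP finE])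
  also have "\<dots> = (\<Sum>f\<in>A \<rightarrow>\<^sub>E S. of_int (if inj_on f A then 1 else 0) * W f)"
    by (intro sum.cong refl)
       (simp add: sum_distrib_right[symmetric] sum_sign_stabilizer[OF A] flip: of_int_sum)
  also have "\<dots> = (\<Sum>f\<in>{f\<in>A \<rightarrow>\<^sub>E S. inj_on f A}. W f)"
    by (auto simp: sum.inter_filter[OF finE] intro!: sum.cong)
  finally show ?thesis by (simp add: W_def)
qed

section \<open>Sums over pairwise distinct rows\<close>

definition distinct_lists :: "'a set \<Rightarrow> nat \<Rightarrow> 'a list set" where
  "distinct_lists S m = {ns. distinct ns \<and> set ns \<subseteq> S \<and> length ns = m}"

lemma bij_betw_map_upt_distinct_lists:
  "bij_betw (\<lambda>f. map f [0..<m]) {f\<in>{0..<m} \<rightarrow>\<^sub>E S. inj_on f {0..<m}} (distinct_lists S m)"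
proof (rule bij_betw_byWitness[where f' = "\<lambda>ns. \<lambda>i\<in>{0..<m}. ns ! i"])
  show "\<forall>f\<in>{f\<in>{0..<m} \<rightarrow>\<^sub>E S. inj_on f {0..<m}}. (\<lambda>i\<in>{0..<m}. map f [0..<m] ! i) = f"
    by (auto simp: fun_eq_iff PiE_def extensional_def)
  show "\<forall>ns\<in>distinct_lists S m. map (\<lambda>i\<in>{0..<m}. ns ! i) [0..<m] = ns"
    by (auto simp: distinct_lists_def intro!: nth_equalityI)
  show "(\<lambda>f. map f [0..<m]) ` {f\<in>{0..<m} \<rightarrow>\<^sub>E S. inj_on f {0..<m}} \<subseteq> distinct_lists S m"
    by (auto simp: distinct_lists_def distinct_map PiE_def)
  show "(\<lambda>ns. \<lambda>i\<in>{0..<m}. ns ! i) ` distinct_lists S m \<subseteq> {f\<in>{0..<m} \<rightarrow>\<^sub>E S. inj_on f {0..<m}}"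
    by (auto simp: distinct_lists_def inj_on_def nth_eq_iff_index_eq)
qed

lemma bij_betw_permute_list_distinct_lists:
  assumes "p permutes {..<m}"
  shows "bij_betw (permute_list p) (distinct_lists S m) (distinct_lists S m)"
proof (rule bij_betw_byWitness[where f' = "permute_list (inv p)"])
  have inv: "inv p permutes {..<m}" using assms by (rule permutes_inv)
  show "\<forall>ns\<in>distinct_lists S m. permute_list (inv p) (permute_list p ns) = ns"
    using assms inv
    by (auto simp: distinct_lists_def permutes_inv_o simp flip: permute_list_compose)
  show "\<forall>ns\<in>distinct_lists S m. permute_list p (permute_list (inv p) ns) = ns"
    using assms inv
    by (auto simp: distinct_lists_def permutes_inv_o simp flip: permute_list_compose)
  show "permute_list p ` distinct_lists S m \<subseteq> distinct_lists S m"
    using assms by (auto simp: distinct_lists_def)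
  show "permute_list (inv p) ` distinct_lists S m \<subseteq> distinct_lists S m"
    using inv by (auto simp: distinct_lists_def)
qed

definition distinct_index_sum :: "('b \<Rightarrow> 'c \<Rightarrow> 'a::comm_semiring_1) \<Rightarrow> 'b set \<Rightarrow> 'c list \<Rightarrow> 'a" where
  "distinct_index_sum a S ks =
     (\<Sum>ns\<in>distinct_lists S (length ks). \<Prod>i=0..<length ks. a (ns ! i) (ks ! i))"

lemma distinct_index_sum_mset_eq:
  assumes "mset ks' = mset ks"
  shows "distinct_index_sum a S ks' = distinct_index_sum a S ks"
proof -
  obtain p where p: "p permutes {..<length ks}" "permute_list p ks = ks'"
    using mset_eq_permutation[OF assms] by blast
  define m where "m = length ks"
  have p': "p permutes {..<m}" and len: "length ks' = m"
    using p by (auto simp: m_def)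
  have "distinct_index_sum a S ks'
      = (\<Sum>ns\<in>distinct_lists S m. \<Prod>i=0..<m. a (permute_list p ns ! i) (ks' ! i))"
    unfolding distinct_index_sum_def len
    by (rule sum.reindex_bij_betw[OF bij_betw_permute_list_distinct_lists[OF p'], symmetric])
  also have "\<dots> = (\<Sum>ns\<in>distinct_lists S m. \<Prod>i\<in>{..<m}. a (ns ! p i) (ks ! p i))"
    using p' p by (intro sum.cong refl prod.cong)
      (auto simp: distinct_lists_def permute_list_nth m_def simp flip: p(2))
  also have "\<dots> = (\<Sum>ns\<in>distinct_lists S m. \<Prod>i\<in>{..<m}. a (ns ! i) (ks ! i))"
    by (intro sum.cong refl prod.reindex_bij_betw permutes_imp_bij[OF p'])
  finally show ?thesis by (simp add: distinct_index_sum_def m_def atLeast0LessThan)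
qed

lemma A_op_truncated:
  assumes \<sigma>: "\<sigma> permutes {0..<size L}"
  shows "A_op \<sigma> L (\<lambda>n j. if n < N then a n j else 0)
       = (\<Prod>C\<in>perm_cycles \<sigma> (size L). \<Sum>n\<in>{1..<N}. \<Prod>i\<in>C. a n (sorted_list_of_multiset L ! i))"
  unfolding A_op_def Let_def
proof (intro prod.cong refl)
  fix C assume "C \<in> perm_cycles \<sigma> (size L)"
  then obtain i where i: "i < size L" "C = orbit \<sigma> i" by (auto simp: perm_cycles_def)
  have C: "finite C" "C \<noteq> {}"
    using finite_subset[OF permutes_orbit_subset[OF \<sigma>]] i orbit_nonempty[of \<sigma> i] by auto
  define ks where "ks = sorted_list_of_multiset L"
  define h where "h n = (\<Prod>i\<in>C. a n (ks ! i))" for n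
  have "(\<Prod>i\<in>C. if Suc n < N then a (Suc n) (ks ! i) else 0) = (if Suc n < N then h (Suc n) else 0)" for n
    using C by (auto simp: h_def card_gt_0_iff)
  hence "(\<Sum>n. \<Prod>i\<in>C. if Suc n < N then a (Suc n) (ks ! i) else 0)
      = (\<Sum>n. if Suc n < N then h (Suc n) else 0)" by simp
  also have "\<dots> = (\<Sum>n | Suc n < N. h (Suc n))"
  proof (rule sums_unique[symmetric], rule sums_If_finite)
    show "finite {n. Suc n < N}" by (rule finite_subset[of _ "{..<N}"]) auto
  qed
  also have "\<dots> = (\<Sum>n\<in>{1..<N}. h n)"
    by (rule sum.reindex_bij_witness[of _ "\<lambda>n. n - 1" Suc]) auto
  finally show "(\<Sum>n. \<Prod>i\<in>C. if Suc n < N then a (Suc n) (ks ! i) else 0)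
      = (\<Sum>n\<in>{1..<N}. \<Prod>i\<in>C. a n (ks ! i))"
    by (simp add: h_def)
qed

lemma sum_sign_A_op_truncated:
  fixes a :: "nat \<Rightarrow> nat \<Rightarrow> complex"
  shows "(\<Sum>\<sigma>\<in>{p. p permutes {0..<size L}}. of_int (sign \<sigma>) * A_op \<sigma> L (\<lambda>n j. if n < N then a n j else 0))
       = distinct_index_sum a {1..<N} (sorted_list_of_multiset L)"
proof -
  define ks where "ks = sorted_list_of_multiset L"
  have len: "length ks = size L" by (metis ks_def mset_sorted_list_of_multiset size_mset)
  have "(\<Sum>\<sigma>\<in>{p. p permutes {0..<size L}}. of_int (sign \<sigma>) * A_op \<sigma> L (\<lambda>n j. if n < N then a n j else 0))
      = (\<Sum>\<sigma>\<in>{p. p permutes {0..<size L}}. of_int (sign \<sigma>) *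
           (\<Prod>C\<in>orbit \<sigma> ` {0..<size L}. \<Sum>n\<in>{1..<N}. \<Prod>i\<in>C. a n (ks ! i)))"
    by (intro sum.cong refl) (simp add: A_op_truncated perm_cycles_def ks_def)
  also have "\<dots> = (\<Sum>f\<in>{f\<in>{0..<size L} \<rightarrow>\<^sub>E {1..<N}. inj_on f {0..<size L}}. \<Prod>i=0..<size L. a (f i) (ks ! i))"
    by (rule sum_sign_prod_orbits) simp_all
  also have "\<dots> = (\<Sum>f\<in>{f\<in>{0..<size L} \<rightarrow>\<^sub>E {1..<N}. inj_on f {0..<size L}}.
                     \<Prod>i=0..<size L. a (map f [0..<size L] ! i) (ks ! i))"
    by (intro sum.cong refl prod.cong) auto
  also have "\<dots> = distinct_index_sum a {1..<N} ks"
    unfolding distinct_index_sum_def len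
    by (rule sum.reindex_bij_betw[OF bij_betw_map_upt_distinct_lists,
          where g = "\<lambda>ns. \<Prod>i=0..<size L. a (ns ! i) (ks ! i)"])
  finally show ?thesis by (simp add: ks_def)
qed

section \<open>Partitions, compositions and power series coefficients\<close>

definition compositions :: "nat \<Rightarrow> nat list set" where
  "compositions k = {ks. (\<forall>x\<in>set ks. 0 < x) \<and> sum_list ks = k}"

lemma length_le_sum_list: "\<forall>x\<in>set ks. 0 < x \<Longrightarrow> length ks \<le> sum_list (ks :: nat list)"
  by (induction ks) auto

lemma finite_compositions: "finite (compositions k)"
proof (rule finite_subset[OF _ finite_lists_length_le[of "{0..k}" k]])
  show "compositions k \<subseteq> {ks. set ks \<subseteq> {0..k} \<and> length ks \<le> k}"
  proof
    fix ks assume "ks \<in> compositions k"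
    hence "\<forall>x\<in>set ks. 0 < x" and sum: "sum_list ks = k" by (auto simp: compositions_def)
    hence "length ks \<le> k" using length_le_sum_list by metis
    moreover have "set ks \<subseteq> {0..k}" using sum by (auto dest: member_le_sum_list)
    ultimately show "ks \<in> {ks. set ks \<subseteq> {0..k} \<and> length ks \<le> k}" by simp
  qed
qed simp

lemma mset_compositions: "mset ` compositions k = partitions k"
proof (intro set_eqI iffI)
  fix L assume "L \<in> partitions k"
  hence "sorted_list_of_multiset L \<in> compositions k"
    by (auto simp: compositions_def partitions_def simp flip: sum_mset_sum_list)
  thus "L \<in> mset ` compositions k" by (metis image_eqI mset_sorted_list_of_multiset)
qed (auto simp: compositions_def partitions_def sum_mset_sum_list)

lemma compositions_with_mset:
  "L \<in> partitions k \<Longrightarrow> {ks\<in>compositions k. mset ks = L} = permutations_of_multiset L"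
  by (auto simp: compositions_def partitions_def permutations_of_multiset_def sum_mset_sum_list
           simp flip: set_mset_mset)

lemma sum_partitions_eq_sum_compositions:
  fixes g :: "nat list \<Rightarrow> 'a::field_char_0"
  assumes g: "\<And>ks ks'. mset ks = mset ks' \<Longrightarrow> g ks = g ks'"
  shows "(\<Sum>L\<in>partitions k. g (sorted_list_of_multiset L) / of_nat (C_stb L))
       = (\<Sum>ks\<in>compositions k. g ks / fact (length ks))"
proof -
  have "(\<Sum>ks\<in>compositions k. g ks / fact (length ks))
      = (\<Sum>L\<in>partitions k. \<Sum>ks\<in>permutations_of_multiset L. g ks / fact (length ks))"
    by (simp add: sum.image_gen[OF finite_compositions, where g = mset] mset_compositions
                  compositions_with_mset cong: sum.cong)
  also have "\<dots> = (\<Sum>L\<in>partitions k. of_nat (card (permutations_of_multiset L)) *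
                      (g (sorted_list_of_multiset L) / fact (size L)))"
  proof (intro sum.cong refl)
    fix L
    have "g ks / fact (length ks) = g (sorted_list_of_multiset L) / fact (size L)"
      if "ks \<in> permutations_of_multiset L" for ks
      using that g[of ks "sorted_list_of_multiset L"]
      by (auto simp: permutations_of_multiset_def dest: arg_cong[of _ _ size])
    thus "(\<Sum>ks\<in>permutations_of_multiset L. g ks / fact (length ks))
        = of_nat (card (permutations_of_multiset L)) * (g (sorted_list_of_multiset L) / fact (size L))"
      by simp
  qed
  also have "\<dots> = (\<Sum>L\<in>partitions k. g (sorted_list_of_multiset L) / of_nat (C_stb L))"
  proof (intro sum.cong refl)
    fix L
    have "of_nat (card (permutations_of_multiset L)) * of_nat (C_stb L) = (fact (size L) :: 'a)"
      using card_permutations_of_multiset_aux[of L] unfolding C_stb_def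
      by (metis of_nat_fact of_nat_mult)
    moreover have "C_stb L \<noteq> 0" by (simp add: C_stb_def)
    ultimately show "of_nat (card (permutations_of_multiset L)) * (g (sorted_list_of_multiset L) / fact (size L))
        = g (sorted_list_of_multiset L) / of_nat (C_stb L)"
      by (simp add: field_simps)
  qed
  finally show ?thesis ..
qed

definition one_plus_fps :: "(nat \<Rightarrow> 'a::{zero,one}) \<Rightarrow> 'a fps" where
  "one_plus_fps c = Abs_fps (\<lambda>j. if j = 0 then 1 else c j)"

lemma fps_nth_prod_atLeast0LessThan:
  fixes G :: "nat \<Rightarrow> 'a::comm_ring_1 fps"
  shows "fps_nth (\<Prod>i=0..<m. G i) k = (\<Sum>ks\<in>natpermute k m. \<Prod>i=0..<m. fps_nth (G i) (ks ! i))"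
proof (cases m)
  case 0
  thus ?thesis by (simp add: natpermute_0)
next
  case (Suc m')
  thus ?thesis by (simp add: atLeastLessThanSuc_atLeastAtMost fps_prod_nth)
qed

lemma fps_nth_prod_distinct_list:
  fixes F :: "'b \<Rightarrow> 'a::comm_ring_1 fps"
  assumes ns: "distinct ns" and F0: "\<And>n. n \<in> set ns \<Longrightarrow> fps_nth (F n) 0 = 0"
  shows "fps_nth (\<Prod>n\<in>set ns. F n) k
       = (\<Sum>ks\<in>{ks\<in>compositions k. length ks = length ns}. \<Prod>i=0..<length ns. fps_nth (F (ns ! i)) (ks ! i))"
proof -
  have "(\<Prod>n\<in>set ns. F n) = (\<Prod>i=0..<length ns. F (ns ! i))"
    using ns by (simp add: prod.distinct_set_conv_list prod.list_conv_set_nth)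
  hence "fps_nth (\<Prod>n\<in>set ns. F n) k = (\<Sum>ks\<in>natpermute k (length ns). \<Prod>i=0..<length ns. fps_nth (F (ns ! i)) (ks ! i))"
    by (simp add: fps_nth_prod_atLeast0LessThan)
  also have "\<dots> = (\<Sum>ks\<in>{ks\<in>compositions k. length ks = length ns}. \<Prod>i=0..<length ns. fps_nth (F (ns ! i)) (ks ! i))"
  proof (rule sum.mono_neutral_right[OF natpermute_finite])
    show "{ks\<in>compositions k. length ks = length ns} \<subseteq> natpermute k (length ns)"
      by (auto simp: compositions_def natpermute_def)
    show "\<forall>ks\<in>natpermute k (length ns) - {ks\<in>compositions k. length ks = length ns}.
            (\<Prod>i=0..<length ns. fps_nth (F (ns ! i)) (ks ! i)) = 0"
    proof
      fix ks assume ks: "ks \<in> natpermute k (length ns) - {ks\<in>compositions k. length ks = length ns}"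
      then obtain i where i: "i < length ns" "ks ! i = 0"
        by (auto simp: compositions_def natpermute_def in_set_conv_nth)
      have "fps_nth (F (ns ! i)) (ks ! i) = 0" using F0 i by simp
      with i show "(\<Prod>i=0..<length ns. fps_nth (F (ns ! i)) (ks ! i)) = 0"
        by (intro prod_zero bexI[of _ i]) auto
    qed
  qed
  finally show ?thesis .
qed

lemma sum_Pow_eq_sum_distinct_lists:
  fixes g :: "'b set \<Rightarrow> 'a::field_char_0"
  assumes S: "finite S"
  shows "(\<Sum>T\<in>Pow S. g T) = (\<Sum>ns\<in>{ns. set ns \<subseteq> S \<and> distinct ns}. g (set ns) / fact (length ns))"
proof -
  define D where "D = {ns. set ns \<subseteq> S \<and> distinct ns}"
  have finD: "finite D" unfolding D_def by (rule finite_subset_distinct[OF S])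
  have img: "set ` D = Pow S"
  proof (intro set_eqI iffI)
    fix T assume T: "T \<in> Pow S"
    then obtain ns where "set ns = T" "distinct ns"
      using finite_distinct_list[OF finite_subset[OF _ S]] by blast
    with T show "T \<in> set ` D" by (auto simp: D_def)
  qed (auto simp: D_def)
  have fibre: "{ns\<in>D. set ns = T} = permutations_of_set T" if "T \<in> Pow S" for T
    using that by (auto simp: D_def permutations_of_set_def)
  have "(\<Sum>ns\<in>D. g (set ns) / fact (length ns))
      = (\<Sum>T\<in>Pow S. \<Sum>ns\<in>permutations_of_set T. g (set ns) / fact (length ns))"
    unfolding sum.image_gen[OF finD, where g = set] img by (intro sum.cong refl) (simp add: fibre)
  also have "\<dots> = (\<Sum>T\<in>Pow S. \<Sum>ns\<in>permutations_of_set T. g T / fact (card T))"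
  proof (intro sum.cong refl)
    fix T ns assume T: "T \<in> Pow S" and ns: "ns \<in> permutations_of_set T"
    from ns have "set ns = T" by (rule permutations_of_setD)
    moreover from ns have "length ns = card T" by (rule length_finite_permutations_of_set)
    ultimately show "g (set ns) / fact (length ns) = g T / fact (card T)" by simp
  qed
  also have "\<dots> = (\<Sum>T\<in>Pow S. g T)"
    using rev_finite_subset[OF S] by (intro sum.cong refl) (simp add: card_permutations_of_set)
  finally show ?thesis by (simp add: D_def)
qed

lemma fps_nth_prod_one_plus_fps:
  fixes a :: "'b \<Rightarrow> nat \<Rightarrow> 'a::field_char_0"
  assumes S: "finite S"
  shows "fps_nth (\<Prod>n\<in>S. one_plus_fps (a n)) k
       = (\<Sum>ks\<in>compositions k. distinct_index_sum a S ks / fact (length ks))"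
proof -
  define F where "F n = Abs_fps (\<lambda>j. if j = 0 then 0 else a n j)" for n
  define D where "D = {ns. set ns \<subseteq> S \<and> distinct ns}"
  have finD: "finite D" unfolding D_def by (rule finite_subset_distinct[OF S])
  have "one_plus_fps (a n) = F n + 1" for n
    by (rule fps_ext) (simp add: one_plus_fps_def F_def)
  hence "fps_nth (\<Prod>n\<in>S. one_plus_fps (a n)) k = (\<Sum>T\<in>Pow S. fps_nth (\<Prod>n\<in>T. F n) k)"
    by (simp add: prod_add[OF S] fps_sum_nth)
  also have "\<dots> = (\<Sum>ns\<in>D. fps_nth (\<Prod>n\<in>set ns. F n) k / fact (length ns))"
    unfolding D_def by (rule sum_Pow_eq_sum_distinct_lists[OF S])
  also have "\<dots> = (\<Sum>ns\<in>D. \<Sum>ks\<in>{ks\<in>compositions k. length ks = length ns}.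
                     (\<Prod>i=0..<length ns. a (ns ! i) (ks ! i)) / fact (length ns))"
  proof (intro sum.cong refl)
    fix ns assume "ns \<in> D"
    hence "fps_nth (\<Prod>n\<in>set ns. F n) k
         = (\<Sum>ks\<in>{ks\<in>compositions k. length ks = length ns}. \<Prod>i=0..<length ns. fps_nth (F (ns ! i)) (ks ! i))"
      by (intro fps_nth_prod_distinct_list) (auto simp: D_def F_def)
    also have "\<dots> = (\<Sum>ks\<in>{ks\<in>compositions k. length ks = length ns}. \<Prod>i=0..<length ns. a (ns ! i) (ks ! i))"
    proof (intro sum.cong refl prod.cong)
      fix ks i assume "ks \<in> {ks\<in>compositions k. length ks = length ns}" "i \<in> {0..<length ns}"
      hence "0 < ks ! i" by (auto simp: compositions_def)
      thus "fps_nth (F (ns ! i)) (ks ! i) = a (ns ! i) (ks ! i)" by (simp add: F_def)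
    qed
    finally show "fps_nth (\<Prod>n\<in>set ns. F n) k / fact (length ns)
        = (\<Sum>ks\<in>{ks\<in>compositions k. length ks = length ns}.
             (\<Prod>i=0..<length ns. a (ns ! i) (ks ! i)) / fact (length ns))"
      by (simp add: sum_divide_distrib)
  qed
  also have "\<dots> = (\<Sum>ks\<in>compositions k. \<Sum>ns\<in>{ns\<in>D. length ks = length ns}.
                     (\<Prod>i=0..<length ns. a (ns ! i) (ks ! i)) / fact (length ns))"
    by (rule sum.swap_restrict[OF finD finite_compositions])
  also have "\<dots> = (\<Sum>ks\<in>compositions k. distinct_index_sum a S ks / fact (length ks))"
    by (intro sum.cong refl)
       (auto simp: distinct_index_sum_def D_def distinct_lists_def sum_divide_distrib intro!: sum.cong)
  finally show ?thesis .
qed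

lemma sum_partitions_sign_A_op_eq_fps_nth:
  fixes a :: "nat \<Rightarrow> nat \<Rightarrow> complex"
  shows "(\<Sum>L\<in>partitions k. (1 / of_nat (C_stb L)) *
            (\<Sum>\<sigma>\<in>{p. p permutes {0..<size L}}.
               of_int (sign \<sigma>) * A_op \<sigma> L (\<lambda>n j. if n < N then a n j else 0)))
       = fps_nth (\<Prod>n\<in>{1..<N}. one_plus_fps (a n)) k"
proof -
  have "(\<Sum>L\<in>partitions k. distinct_index_sum a {1..<N} (sorted_list_of_multiset L) / of_nat (C_stb L))
      = (\<Sum>ks\<in>compositions k. distinct_index_sum a {1..<N} ks / fact (length ks))"
    by (rule sum_partitions_eq_sum_compositions) (rule distinct_index_sum_mset_eq)
  thus ?thesis by (simp add: sum_sign_A_op_truncated fps_nth_prod_one_plus_fps)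
qed

section \<open>Coefficients of uniform limits\<close>

lemma summable_one_plus_fps:
  fixes c :: "nat \<Rightarrow> 'a::real_normed_field"
  assumes "summable (\<lambda>j. c (Suc j) * z ^ Suc j)"
  shows "summable (\<lambda>j. fps_nth (one_plus_fps c) j * z ^ j)"
  using assms by (subst summable_Suc_iff[symmetric]) (simp add: one_plus_fps_def)

lemma eval_fps_one_plus_fps:
  fixes c :: "nat \<Rightarrow> 'a::{banach, real_normed_field}"
  assumes "summable (\<lambda>j. c (Suc j) * z ^ Suc j)"
  shows "eval_fps (one_plus_fps c) z = 1 + (\<Sum>j. c (Suc j) * z ^ Suc j)"
  using suminf_split_head[OF summable_one_plus_fps[OF assms]]
  by (simp add: eval_fps_def one_plus_fps_def)

lemma fps_conv_radius_one_plus_fps: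
  fixes c :: "nat \<Rightarrow> 'a::{banach, real_normed_field}"
  assumes "\<forall>z\<in>ball 0 r. summable (\<lambda>j. c (Suc j) * z ^ Suc j)"
  shows "ereal r \<le> fps_conv_radius (one_plus_fps c)"
  unfolding fps_conv_radius_def
proof (rule conv_radius_geI_ex')
  fix \<rho> :: real assume "0 < \<rho>" "ereal \<rho> < ereal r"
  thus "summable (\<lambda>j. fps_nth (one_plus_fps c) j * of_real \<rho> ^ j)"
    using assms by (intro summable_one_plus_fps) simp
qed

lemma holomorphic_on_one_plus_series:
  fixes c :: "nat \<Rightarrow> complex"
  assumes "\<forall>z\<in>ball 0 r. summable (\<lambda>j. c (Suc j) * z ^ Suc j)"
  shows "(\<lambda>z. 1 + (\<Sum>j. c (Suc j) * z ^ Suc j)) holomorphic_on ball 0 r"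
proof -
  have "ball 0 r \<subseteq> eball 0 (fps_conv_radius (one_plus_fps c))"
  proof
    fix z assume "z \<in> ball 0 r"
    hence "ereal (dist 0 z) < ereal r" by simp
    also have "\<dots> \<le> fps_conv_radius (one_plus_fps c)" by (rule fps_conv_radius_one_plus_fps[OF assms])
    finally show "z \<in> eball 0 (fps_conv_radius (one_plus_fps c))" by simp
  qed
  hence "eval_fps (one_plus_fps c) holomorphic_on ball 0 r"
    by (rule holomorphic_on_eval_fps)
  thus ?thesis
    by (rule holomorphic_transform) (use assms in \<open>simp add: eval_fps_one_plus_fps\<close>)
qed

lemma has_fps_expansion_one_plus_series:
  fixes c :: "nat \<Rightarrow> complex"
  assumes "r > 0" and "\<forall>z\<in>ball 0 r. summable (\<lambda>j. c (Suc j) * z ^ Suc j)"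
  shows "(\<lambda>z. 1 + (\<Sum>j. c (Suc j) * z ^ Suc j)) has_fps_expansion one_plus_fps c"
  unfolding has_fps_expansion_def
proof
  have "0 < ereal r" using assms(1) by simp
  also have "\<dots> \<le> fps_conv_radius (one_plus_fps c)" by (rule fps_conv_radius_one_plus_fps[OF assms(2)])
  finally show "0 < fps_conv_radius (one_plus_fps c)" .
  have "eventually (\<lambda>z. z \<in> ball 0 r) (nhds (0::complex))"
    using assms(1) by (intro eventually_nhds_in_open) auto
  thus "eventually (\<lambda>z. eval_fps (one_plus_fps c) z = 1 + (\<Sum>j. c (Suc j) * z ^ Suc j)) (nhds 0)"
    by eventually_elim (use assms(2) in \<open>simp add: eval_fps_one_plus_fps\<close>)
qed

lemma fps_nth_tendsto_of_uniform_limit: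
  fixes f :: "nat \<Rightarrow> complex \<Rightarrow> complex"
  assumes "uniform_limit A f g sequentially" and "\<And>N. f N holomorphic_on A"
    and "open A" and "0 \<in> A"
    and "\<And>N. f N has_fps_expansion F N" and "g has_fps_expansion G"
  shows "(\<lambda>N. fps_nth (F N) k) \<longlonglongrightarrow> fps_nth G k"
proof -
  have "(\<lambda>N. (deriv ^^ k) (f N) 0) \<longlonglongrightarrow> (deriv ^^ k) g 0"
    using assms(1-4) by (intro higher_deriv_complex_uniform_limit) auto
  hence "(\<lambda>N. (deriv ^^ k) (f N) 0 / fact k) \<longlonglongrightarrow> (deriv ^^ k) g 0 / fact k"
    by (intro tendsto_divide tendsto_const) auto
  thus ?thesis unfolding fps_nth_fps_expansion[OF assms(5)] fps_nth_fps_expansion[OF assms(6)] .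
qed

theorem mainTheorem5:
  fixes a :: "nat \<Rightarrow> nat \<Rightarrow> complex" and X :: "nat \<Rightarrow> complex" and r :: real and k :: nat
  assumes r_pos: "r > 0"
    and a_conv: "\<forall>n\<ge>1. \<forall>z\<in>ball 0 r. summable (\<lambda>j. a n (Suc j) * z ^ Suc j)"
    and X_conv: "\<forall>z\<in>ball 0 r. summable (\<lambda>j. X (Suc j) * z ^ Suc j)"
    and unif: "uniform_limit (ball 0 r)
                 (\<lambda>N z. \<Prod>n\<in>{1..N}. 1 + (\<Sum>j. a n (Suc j) * z ^ Suc j))
                 (\<lambda>z. 1 + (\<Sum>j. X (Suc j) * z ^ Suc j)) sequentially"
    and k_pos: "k \<ge> 1"
  shows "(\<lambda>N. \<Sum>L\<in>partitions k. (1 / of_nat (C_stb L)) *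
            (\<Sum>\<sigma>\<in>{p. p permutes {0..<size L}}.
               of_int (sign \<sigma>) * A_op \<sigma> L (\<lambda>n j. if n < N then a n j else 0)))
         \<longlonglongrightarrow> X k"
proof -
  have holomorphic: "(\<lambda>z. \<Prod>n\<in>{1..M}. 1 + (\<Sum>j. a n (Suc j) * z ^ Suc j)) holomorphic_on ball 0 r" for M
    using a_conv by (intro holomorphic_on_prod holomorphic_on_one_plus_series) auto
  have expansion: "(\<lambda>z. \<Prod>n\<in>{1..M}. 1 + (\<Sum>j. a n (Suc j) * z ^ Suc j))
      has_fps_expansion (\<Prod>n\<in>{1..M}. one_plus_fps (a n))" for M
    using a_conv by (intro has_fps_expansion_prod has_fps_expansion_one_plus_series[OF r_pos]) auto
  have "(\<lambda>M. fps_nth (\<Prod>n\<in>{1..M}. one_plus_fps (a n)) k) \<longlonglongrightarrow> fps_nth (one_plus_fps X) k"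
    by (rule fps_nth_tendsto_of_uniform_limit[OF unif holomorphic _ _ expansion
          has_fps_expansion_one_plus_series[OF r_pos X_conv]]) (use r_pos in auto)
  moreover have "fps_nth (one_plus_fps X) k = X k"
    using k_pos by (simp add: one_plus_fps_def)
  ultimately show ?thesis
    unfolding sum_partitions_sign_A_op_eq_fps_nth
    by (subst filterlim_sequentially_Suc[symmetric]) (simp add: atLeastLessThanSuc_atLeastAtMost)
qed

end
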